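(* The matrix $T^{(+)}(\lambda):=\tilde T^{QTM\,t}(-\lambda)$ is a representation of the Yang–Baxter algebra $R_{12}(\lambda-\mu)T_1(\lambda)T_2(\mu)=T_2(\mu)T_1(\lambda)R_{12}(\lambda-\mu)$ and satisfies the crossing relation \[ (T^{(+)a})^a(\lambda)=\delta(\lambda)\,T^{(+)}(\lambda-2\eta),\qquad \delta(\lambda)=\left[\frac{b(-\lambda+\frac{\beta}{N}-\eta)\,b(-\lambda-\frac{\beta}{N})}{b(-\lambda-\frac{\beta}{N}+\eta)\,b(-\lambda+\frac{\beta}{N})}\right]^{N/2}, \] where the antipode is $T^a(\lambda)=(T^{-1}(\lambda))^t$ (inverse and transpose in the $2\times2$ auxiliary space).
   Context: XXZ setting: $R(\lambda)=\begin{pmatrix}1&0&0&0\\0&b(\lambda)&c(\lambda)&0\\0&c(\lambda)&b(\lambda)&0\\0&0&0&1\end{pmatrix}$, $b(\lambda)=\sinh\lambda/\sinh(\lambda+\eta)$, $c(\lambda)=\sinh\eta/\sinh(\lambda+\eta)$, $\beta>0$, $N$ even. On $(\mathbb C^2)^{\otimes N}$: $\mathcal L_n(\lambda,\mu)=R_{0n}(\lambda-\mu)$, $\tilde{\mathcal L}_n(\mu,\lambda)=R^{t_0}_{n0}(\mu-\lambda)$ ($0$ the auxiliary $\mathbb C^2$); $T^{QTM}(\lambda)=\tilde{\mathcal L}_N(-\tfrac{\beta}{N},\lambda)\mathcal L_{N-1}(\lambda,\tfrac{\beta}{N})\cdots\tilde{\mathcal L}_2(-\tfrac{\beta}{N},\lambda)\mathcal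 L_1(\lambda,\tfrac{\beta}{N})$; $a(\lambda)=b^{N/2}(-\tfrac{\beta}{N}-\lambda)$; $\tilde T^{QTM}(\lambda)=T^{QTM}(\lambda)/a(\lambda)$; $t$ denotes transposition in the auxiliary space. *)

theory Defs
  imports Complex_Main
begin

text \<open>
  The local space C^2 has basis indexed by bool (False = first basis vector).
  A basis state of the quantum space (C^2)^(tensor N) is a bool list of length N
  (entry k = state of site k+1).  An operator on the quantum space is given by its
  matrix entries; an element of End(C^2 (x) quantum space) is a 2x2 auxiliary matrix
  whose entries are quantum-space operators.  All equalities of operators are
  understood on the basis states (lists of length N).
\<close>

type_synonym qop = "bool list \<Rightarrow> bool list \<Rightarrow> complex"
type_synonym amat = "bool \<Rightarrow> bool \<Rightarrow> qop"

definition states :: "nat \<Rightarrow> bool list set" where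
  "states N = {s. length s = N}"

definition bfun :: "complex \<Rightarrow> complex \<Rightarrow> complex" where
  "bfun \<eta> l = sinh l / sinh (l + \<eta>)"

definition cfun :: "complex \<Rightarrow> complex \<Rightarrow> complex" where
  "cfun \<eta> l = sinh \<eta> / sinh (l + \<eta>)"

text \<open>R-matrix entries: row index (a1,a2), column index (b1,b2) in C^2 (x) C^2.\<close>
definition Rmat :: "complex \<Rightarrow> complex \<Rightarrow> bool \<Rightarrow> bool \<Rightarrow> bool \<Rightarrow> bool \<Rightarrow> complex" where
  "Rmat \<eta> l a1 a2 b1 b2 =
     (if a1 = a2 \<and> b1 = b2 \<and> a1 = b1 then 1
      else if a1 = b1 \<and> a2 = b2 \<and> a1 \<noteq> a2 then bfun \<eta> l
      else if a1 = b2 \<and> a2 = b1 \<and> a1 \<noteq> a2 then cfun \<eta> l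
      else 0)"

definition op_mult :: "nat \<Rightarrow> qop \<Rightarrow> qop \<Rightarrow> qop" where
  "op_mult N A B s t = (\<Sum>u\<in>states N. A s u * B u t)"

definition am_mult :: "nat \<Rightarrow> amat \<Rightarrow> amat \<Rightarrow> amat" where
  "am_mult N X Y a c = (\<lambda>s t. \<Sum>b\<in>(UNIV::bool set). op_mult N (X a b) (Y b c) s t)"

definition am_id :: amat where
  "am_id a b s t = (if a = b \<and> s = t then 1 else 0)"

definition am_eq :: "nat \<Rightarrow> amat \<Rightarrow> amat \<Rightarrow> bool" where
  "am_eq N X Y \<longleftrightarrow> (\<forall>a b. \<forall>s\<in>states N. \<forall>t\<in>states N. X a b s t = Y a b s t)"

definition am_is_inverse :: "nat \<Rightarrow> amat \<Rightarrow> amat \<Rightarrow> bool" where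
  "am_is_inverse N X Y \<longleftrightarrow> am_eq N (am_mult N X Y) am_id \<and> am_eq N (am_mult N Y X) am_id"

definition am_invertible :: "nat \<Rightarrow> amat \<Rightarrow> bool" where
  "am_invertible N X \<longleftrightarrow> (\<exists>Y. am_is_inverse N X Y)"

definition am_inv :: "nat \<Rightarrow> amat \<Rightarrow> amat" where
  "am_inv N X = (SOME Y. am_is_inverse N X Y)"

definition am_transp :: "amat \<Rightarrow> amat" where
  "am_transp X a b = X b a"

definition antipode :: "nat \<Rightarrow> amat \<Rightarrow> amat" where
  "antipode N X = am_transp (am_inv N X)"

text \<open>Identity on all sites except site index n (0-based).\<close>
definition same_off :: "nat \<Rightarrow> bool list \<Rightarrow> bool list \<Rightarrow> complex" where
  "same_off n s t = (if \<forall>k<length s. k \<noteq> n \<longrightarrow> s ! k = t ! k then 1 else 0)"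

text \<open>L_n(lambda,mu) = R_{0n}(lambda - mu), site n given by 0-based index n.\<close>
definition Lop :: "complex \<Rightarrow> nat \<Rightarrow> complex \<Rightarrow> complex \<Rightarrow> amat" where
  "Lop \<eta> n l \<mu> a b s t = Rmat \<eta> (l - \<mu>) a (s ! n) b (t ! n) * same_off n s t"

text \<open>Ltilde_n(mu,lambda) = R^{t_0}_{n0}(mu - lambda), site n given by 0-based index n.\<close>
definition Ltil :: "complex \<Rightarrow> nat \<Rightarrow> complex \<Rightarrow> complex \<Rightarrow> amat" where
  "Ltil \<eta> n \<mu> l a b s t = Rmat \<eta> (\<mu> - l) (s ! n) b (t ! n) a * same_off n s t"

definition bN :: "real \<Rightarrow> nat \<Rightarrow> complex" where
  "bN \<beta> N = complex_of_real \<beta> / of_nat N"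

definition qtm_site :: "complex \<Rightarrow> real \<Rightarrow> nat \<Rightarrow> nat \<Rightarrow> complex \<Rightarrow> amat" where
  "qtm_site \<eta> \<beta> N m l =
     (if even m then Ltil \<eta> (m - 1) (- bN \<beta> N) l else Lop \<eta> (m - 1) l (bN \<beta> N))"

fun qtm_prod :: "complex \<Rightarrow> real \<Rightarrow> nat \<Rightarrow> nat \<Rightarrow> complex \<Rightarrow> amat" where
  "qtm_prod \<eta> \<beta> N 0 l = am_id"
| "qtm_prod \<eta> \<beta> N (Suc m) l = am_mult N (qtm_site \<eta> \<beta> N (Suc m) l) (qtm_prod \<eta> \<beta> N m l)"

definition TQTM :: "complex \<Rightarrow> real \<Rightarrow> nat \<Rightarrow> complex \<Rightarrow> amat" where
  "TQTM \<eta> \<beta> N l = qtm_prod \<eta> \<beta> N N l"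

definition afun :: "complex \<Rightarrow> real \<Rightarrow> nat \<Rightarrow> complex \<Rightarrow> complex" where
  "afun \<eta> \<beta> N l = bfun \<eta> (- bN \<beta> N - l) ^ (N div 2)"

definition TQTMt :: "complex \<Rightarrow> real \<Rightarrow> nat \<Rightarrow> complex \<Rightarrow> amat" where
  "TQTMt \<eta> \<beta> N l a b s t = TQTM \<eta> \<beta> N l a b s t / afun \<eta> \<beta> N l"

definition Tplus :: "complex \<Rightarrow> real \<Rightarrow> nat \<Rightarrow> complex \<Rightarrow> amat" where
  "Tplus \<eta> \<beta> N l = am_transp (TQTMt \<eta> \<beta> N (- l))"

definition delta :: "complex \<Rightarrow> real \<Rightarrow> nat \<Rightarrow> complex \<Rightarrow> complex" where
  "delta \<eta> \<beta> N l =
     ((bfun \<eta> (- l + bN \<beta> N - \<eta>) * bfun \<eta> (- l - bN \<beta> N)) /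
      (bfun \<eta> (- l - bN \<beta> N + \<eta>) * bfun \<eta> (- l + bN \<beta> N))) ^ (N div 2)"

definition RTT :: "complex \<Rightarrow> nat \<Rightarrow> (complex \<Rightarrow> amat) \<Rightarrow> complex \<Rightarrow> complex \<Rightarrow> bool" where
  "RTT \<eta> N T l \<mu> \<longleftrightarrow>
    (\<forall>a c b d. \<forall>s\<in>states N. \<forall>t\<in>states N.
       (\<Sum>e\<in>(UNIV::bool set). \<Sum>f\<in>(UNIV::bool set).
          Rmat \<eta> (l - \<mu>) a c e f * op_mult N (T l e b) (T \<mu> f d) s t)
     = (\<Sum>e\<in>(UNIV::bool set). \<Sum>f\<in>(UNIV::bool set).
          op_mult N (T \<mu> c e) (T l a f) s t * Rmat \<eta> (l - \<mu>) f e b d))"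

text \<open>Genericity of a spectral parameter: all the hyperbolic sines that occur as
  denominators (or whose vanishing destroys invertibility) are nonzero.\<close>
definition generic :: "complex \<Rightarrow> real \<Rightarrow> nat \<Rightarrow> complex \<Rightarrow> bool" where
  "generic \<eta> \<beta> N l \<longleftrightarrow>
     (\<forall>k::int. -3 \<le> k \<and> k \<le> 3 \<longrightarrow>
        sinh (l + bN \<beta> N + of_int k * \<eta>) \<noteq> 0 \<and> sinh (l - bN \<beta> N + of_int k * \<eta>) \<noteq> 0)"

end

theory Submission
  imports Defs
begin

text \<open>
  Transposition in the auxiliary space reverses the order of a product of auxiliary matrices
  whose entries commute.  Hence \<open>T\<^sup>+(\<lambda>)\<close> is, up to the scalar \<open>1/a(-\<lambda>)\<close>, the product
  over the sites \<open>1, \<dots>, N\<close> (in this order) of local vertices, of \<open>R\<close>-type at even and of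
  \<open>R\<^sup>t\<close>-type at odd sites.  Each local vertex satisfies the RTT relation by the Yang-Baxter
  equation of the six-vertex weights, and the RTT relation passes to products of
  representations whose entries commute.

  The local vertices form a commutative algebra of weight quadruples in which inverses are
  explicit.  Inverting a product reverses its order and transposing reverses it back, so
  the antipode of the product is the product of the local antipodes.  Taking the local antipode twice gives the
  vertex at \<open>\<lambda> - 2\<eta>\<close> times a scalar; the product of these scalars together with the
  normalisations \<open>a(-\<lambda>)\<close> and \<open>a(-\<lambda> + 2\<eta>)\<close> is \<open>\<delta>(\<lambda>)\<close>.
\<close>

type_synonym 'i opmat = "'i \<Rightarrow> 'i \<Rightarrow> qop"

definition mmult :: "nat \<Rightarrow> ('i::finite) opmat \<Rightarrow> 'i opmat \<Rightarrow> 'i opmat" where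
  "mmult N X Y i k = (\<lambda>s t. \<Sum>j\<in>UNIV. op_mult N (X i j) (Y j k) s t)"

definition meq :: "nat \<Rightarrow> 'i opmat \<Rightarrow> 'i opmat \<Rightarrow> bool" where
  "meq N X Y \<longleftrightarrow> (\<forall>i j. \<forall>s\<in>states N. \<forall>t\<in>states N. X i j s t = Y i j s t)"

definition mone :: "'i opmat" where
  "mone i j s t = (if i = j \<and> s = t then 1 else 0)"

definition mscale :: "complex \<Rightarrow> 'i opmat \<Rightarrow> 'i opmat" where
  "mscale c X i j s t = c * X i j s t"

lemma am_mult_eq_mmult: "am_mult N = mmult N"
  by (auto simp: fun_eq_iff am_mult_def mmult_def)

lemma am_eq_eq_meq: "am_eq N = meq N"
  by (auto simp: fun_eq_iff am_eq_def meq_def)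

lemma am_id_eq_mone: "am_id = mone"
  by (auto simp: fun_eq_iff am_id_def mone_def)

lemma finite_states [simp]: "finite (states N)"
proof -
  have "states N = {xs. set xs \<subseteq> (UNIV::bool set) \<and> length xs = N}"
    by (auto simp: states_def)
  thus ?thesis using finite_lists_length_eq[of "UNIV::bool set" N] by simp
qed

lemma meq_refl [simp]: "meq N X X"
  by (simp add: meq_def)

lemma meq_sym: "meq N X Y \<Longrightarrow> meq N Y X"
  by (simp add: meq_def)

lemma meq_trans [trans]: "meq N X Y \<Longrightarrow> meq N Y Z \<Longrightarrow> meq N X Z"
  by (simp add: meq_def)

lemma op_mult_assoc: "op_mult N (op_mult N A B) C = op_mult N A (op_mult N B C)"
  unfolding op_mult_def fun_eq_iff
  by (simp add: sum_distrib_left sum_distrib_right mult.assoc) (intro allI sum.swap)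

lemma op_mult_sum_left:
  "op_mult N (\<lambda>s t. \<Sum>m\<in>M. F m s t) B s t = (\<Sum>m\<in>M. op_mult N (F m) B s t)"
  unfolding op_mult_def by (simp add: sum_distrib_right) (rule sum.swap)

lemma op_mult_sum_right:
  "op_mult N A (\<lambda>s t. \<Sum>m\<in>M. F m s t) s t = (\<Sum>m\<in>M. op_mult N A (F m) s t)"
  unfolding op_mult_def by (simp add: sum_distrib_left) (rule sum.swap)

lemma op_mult_scale:
  "op_mult N (\<lambda>s t. c * A s t) (\<lambda>s t. d * B s t) s t = c * d * op_mult N A B s t"
  unfolding op_mult_def by (simp add: sum_distrib_left ac_simps)

lemma op_mult_zero_left [simp]: "op_mult N (\<lambda>s t. 0) B s t = 0"
  by (simp add: op_mult_def)

lemma op_mult_zero_right [simp]: "op_mult N A (\<lambda>s t. 0) s t = 0"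
  by (simp add: op_mult_def)

lemma op_mult_cong:
  assumes "\<And>s t. s \<in> states N \<Longrightarrow> t \<in> states N \<Longrightarrow> A s t = A' s t"
    and "\<And>s t. s \<in> states N \<Longrightarrow> t \<in> states N \<Longrightarrow> B s t = B' s t"
    and "s \<in> states N" "t \<in> states N"
  shows "op_mult N A B s t = op_mult N A' B' s t"
  unfolding op_mult_def using assms by (intro sum.cong) auto

lemma op_mult_diag_left:
  "s \<in> states N \<Longrightarrow> op_mult N (\<lambda>s t. if s = t then r else 0) B s t = r * B s t"
  unfolding op_mult_def by (simp add: sum.delta' if_distrib[where f="\<lambda>x. x * _"] cong: if_cong)

lemma op_mult_diag_right:
  "t \<in> states N \<Longrightarrow> op_mult N A (\<lambda>s t. if s = t then r else 0) s t = A s t * r"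
  unfolding op_mult_def by (simp add: sum.delta if_distrib[where f="\<lambda>x. _ * x"] cong: if_cong)

lemma mone_eq_diag: "mone i j = (\<lambda>s t. if s = t then (if i = j then 1 else 0) else 0)"
  by (auto simp: fun_eq_iff mone_def)

lemma mmult_assoc: "mmult N (mmult N X Y) Z = mmult N X (mmult N Y Z)"
  unfolding fun_eq_iff mmult_def
  by (simp add: op_mult_sum_left op_mult_sum_right op_mult_assoc) (intro allI sum.swap)

lemma mmult_cong: "meq N X X' \<Longrightarrow> meq N Y Y' \<Longrightarrow> meq N (mmult N X Y) (mmult N X' Y')"
  unfolding meq_def mmult_def by (auto intro!: sum.cong op_mult_cong)

lemma mmult_one_left: "meq N (mmult N mone X) X"
  by (simp add: meq_def mmult_def mone_eq_diag op_mult_diag_left if_distrib[where f="\<lambda>x. x * _"]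
      sum.delta' cong: if_cong)

lemma mmult_one_right: "meq N (mmult N X mone) X"
  by (simp add: meq_def mmult_def mone_eq_diag op_mult_diag_right if_distrib[where f="\<lambda>x. _ * x"]
      sum.delta cong: if_cong)

lemma mscale_apply: "mscale c X i j = (\<lambda>s t. c * X i j s t)"
  by (simp add: fun_eq_iff mscale_def)

lemma mmult_mscale: "mmult N (mscale c X) (mscale d Y) = mscale (c * d) (mmult N X Y)"
  by (simp add: fun_eq_iff mmult_def mscale_apply op_mult_scale sum_distrib_left)

lemma mscale_cong: "meq N X Y \<Longrightarrow> meq N (mscale c X) (mscale c Y)"
  unfolding meq_def mscale_def by auto

lemma mscale_mscale: "mscale c (mscale d X) = mscale (c * d) X"
  by (simp add: fun_eq_iff mscale_def)

lemma mscale_one: "mscale 1 X = X"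
  by (simp add: fun_eq_iff mscale_def)

lemma am_transp_mscale: "am_transp (mscale c X) = mscale c (am_transp X)"
  by (simp add: fun_eq_iff mscale_def am_transp_def)

lemma am_transp_cong: "meq N X Y \<Longrightarrow> meq N (am_transp X) (am_transp Y)"
  unfolding meq_def am_transp_def by auto

definition commuting :: "nat \<Rightarrow> 'i opmat \<Rightarrow> 'j opmat \<Rightarrow> bool" where
  "commuting N X Y \<longleftrightarrow> (\<forall>a b c d. \<forall>s\<in>states N. \<forall>t\<in>states N.
      op_mult N (X a b) (Y c d) s t = op_mult N (Y c d) (X a b) s t)"

lemma commuting_sym: "commuting N X Y \<Longrightarrow> commuting N Y X"
  unfolding commuting_def by metis

lemma commuting_mone: "commuting N X mone"
  unfolding commuting_def mone_eq_diag
  by (simp add: op_mult_diag_left op_mult_diag_right mult.commute)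

lemma commuting_mmult:
  assumes A: "commuting N X A" and B: "commuting N X B"
  shows "commuting N X (mmult N A B)"
  unfolding commuting_def
proof (intro allI ballI)
  fix a b c d s t assume s: "s \<in> states N" and t: "t \<in> states N"
  have "op_mult N (X a b) (mmult N A B c d) s t
      = (\<Sum>j\<in>UNIV. op_mult N (op_mult N (X a b) (A c j)) (B j d) s t)"
    by (simp add: mmult_def op_mult_sum_right op_mult_assoc)
  also have "\<dots> = (\<Sum>j\<in>UNIV. op_mult N (op_mult N (A c j) (X a b)) (B j d) s t)"
    by (intro sum.cong refl op_mult_cong[OF _ _ s t]) (use A in \<open>auto simp: commuting_def\<close>)
  also have "\<dots> = (\<Sum>j\<in>UNIV. op_mult N (A c j) (op_mult N (B j d) (X a b)) s t)"
    unfolding op_mult_assoc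
    by (intro sum.cong refl op_mult_cong[OF _ _ s t]) (use B in \<open>auto simp: commuting_def\<close>)
  also have "\<dots> = op_mult N (mmult N A B c d) (X a b) s t"
    by (simp add: mmult_def op_mult_sum_left op_mult_assoc)
  finally show "op_mult N (X a b) (mmult N A B c d) s t = op_mult N (mmult N A B c d) (X a b) s t" .
qed

lemma am_transp_mmult:
  "commuting N A B \<Longrightarrow> meq N (am_transp (mmult N A B)) (mmult N (am_transp B) (am_transp A))"
  unfolding meq_def commuting_def am_transp_def mmult_def by (auto intro!: sum.cong)

type_synonym 'i locmat = "'i \<Rightarrow> 'i \<Rightarrow> bool \<Rightarrow> bool \<Rightarrow> complex"

definition site_op :: "nat \<Rightarrow> 'i locmat \<Rightarrow> 'i opmat" where
  "site_op n x i j s t = x i j (s ! n) (t ! n) * same_off n s t"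

definition local_mult :: "('i::finite) locmat \<Rightarrow> 'i locmat \<Rightarrow> 'i locmat" where
  "local_mult x y i k p r = (\<Sum>j\<in>UNIV. \<Sum>q\<in>UNIV. x i j p q * y j k q r)"

lemma same_off_self_update: "n < length s \<Longrightarrow> same_off n s (s[n := q]) = 1"
  by (simp add: same_off_def nth_list_update)

lemma same_off_update_left: "n < length s \<Longrightarrow> same_off n (s[n := q]) t = same_off n s t"
  by (simp add: same_off_def nth_list_update)

lemma same_off_eq_0:
  assumes "length u = length s" "n < length s" "u \<noteq> s[n := False]" "u \<noteq> s[n := True]"
  shows "same_off n s u = 0"
proof (rule ccontr)
  assume "same_off n s u \<noteq> 0"
  hence "\<forall>k<length s. k \<noteq> n \<longrightarrow> s ! k = u ! k"
    by (simp add: same_off_def split: if_splits)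
  hence "u = s[n := u ! n]"
    using assms(1,2) by (auto simp: list_eq_iff_nth_eq nth_list_update)
  thus False using assms(3,4) by (cases "u ! n") auto
qed

lemma sum_same_off:
  assumes s: "s \<in> states N" and n: "n < N"
  shows "(\<Sum>u\<in>states N. same_off n s u * f u) = f (s[n := False]) + f (s[n := True])"
proof -
  have ls: "length s = N" using s by (simp add: states_def)
  have "(\<Sum>u\<in>states N. same_off n s u * f u) = (\<Sum>u\<in>{s[n := False], s[n := True]}. same_off n s u * f u)"
    using ls by (intro sum.mono_neutral_right finite_states) (auto simp: states_def n same_off_eq_0)
  moreover have "s[n := False] \<noteq> s[n := True]"
    using ls n by (metis nth_list_update_eq)
  ultimately show ?thesis using ls n by (simp add: same_off_self_update)
qed

lemma op_mult_site_op_left: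
  assumes s: "s \<in> states N" and n: "n < N"
  shows "op_mult N (site_op n x i j) B s t =
     x i j (s ! n) False * B (s[n := False]) t + x i j (s ! n) True * B (s[n := True]) t"
proof -
  have "op_mult N (site_op n x i j) B s t
      = (\<Sum>u\<in>states N. same_off n s u * (x i j (s ! n) (u ! n) * B u t))"
    unfolding op_mult_def site_op_def by (simp add: ac_simps)
  also have "\<dots> = x i j (s ! n) False * B (s[n := False]) t + x i j (s ! n) True * B (s[n := True]) t"
    using sum_same_off[OF s n] s n by (simp add: states_def)
  finally show ?thesis .
qed

lemma mmult_site_op_same:
  "n < N \<Longrightarrow> meq N (mmult N (site_op n x) (site_op n y)) (site_op n (local_mult x y))"
  unfolding meq_def mmult_def
  by (auto simp: op_mult_site_op_left site_op_def local_mult_def states_def same_off_update_left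
      sum_distrib_right sum_distrib_left UNIV_bool algebra_simps)

lemma op_mult_site_op_distinct:
  assumes s: "s \<in> states N" and t: "t \<in> states N" and n: "n < N" and m: "m < N" and "n \<noteq> m"
  shows "op_mult N (site_op n x i j) (site_op m y k l) s t =
     x i j (s ! n) (t ! n) * y k l (s ! m) (t ! m) *
       (if \<forall>k<N. k \<noteq> n \<and> k \<noteq> m \<longrightarrow> s ! k = t ! k then 1 else 0)"
proof -
  have "length s = N" "length t = N" using s t by (auto simp: states_def)
  thus ?thesis using \<open>n \<noteq> m\<close> n m unfolding op_mult_site_op_left[OF s n]
    by (cases "t ! n") (auto simp: site_op_def same_off_def nth_list_update)
qed

lemma commuting_site_op_distinct:
  "n < N \<Longrightarrow> m < N \<Longrightarrow> n \<noteq> m \<Longrightarrow> commuting N (site_op n x) (site_op m y)"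
  unfolding commuting_def by (auto simp: op_mult_site_op_distinct conj_commute)

lemma site_op_diag:
  assumes "n < N"
  shows "meq N (site_op n (\<lambda>i j p q. if p = q then c i j else 0)) (\<lambda>i j s t. if s = t then c i j else 0)"
  using assms unfolding meq_def site_op_def same_off_def states_def
  by (auto simp: list_eq_iff_nth_eq)

lemma am_transp_site_op: "am_transp (site_op n x) = site_op n (\<lambda>a b. x b a)"
  by (simp add: fun_eq_iff am_transp_def site_op_def)

section \<open>Vertices given by four weights\<close>

type_synonym weights = "complex \<times> complex \<times> complex \<times> complex"

text \<open>Auxiliary indices \<open>a b\<close>, quantum indices \<open>x y\<close>.  The \<open>R\<close>-matrix is the vertex
  \<open>(1, b, c, 0)\<close> and its partial transpose \<open>R\<^sup>t\<^sup>0\<close> the vertex \<open>(1, b, 0, c)\<close>.\<close>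

definition vertex :: "weights \<Rightarrow> bool locmat" where
  "vertex w a b x y = (case w of (p, q, r, s) \<Rightarrow>
     if a = b \<and> x = y then (if a = x then p else q)
     else if a \<noteq> b \<and> x \<noteq> y then (if a = x then s else r) else 0)"

text \<open>Under \<open>vertex\<close>, the weights multiply as the pairs \<open>(p + s\<epsilon>, q + r\<epsilon>)\<close> with
  \<open>\<epsilon>\<^sup>2 = 1\<close>; this gives the inverse below.\<close>

definition wmult :: "weights \<Rightarrow> weights \<Rightarrow> weights" where
  "wmult w w' = (case w of (p, q, r, s) \<Rightarrow> case w' of (p', q', r', s') \<Rightarrow>
      (p * p' + s * s', q * q' + r * r', q * r' + r * q', p * s' + s * p'))"

definition wone :: weights where
  "wone = (1, 1, 0, 0)"

definition winvertible :: "weights \<Rightarrow> bool" where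
  "winvertible w = (case w of (p, q, r, s) \<Rightarrow> p\<^sup>2 - s\<^sup>2 \<noteq> 0 \<and> q\<^sup>2 - r\<^sup>2 \<noteq> 0)"

definition winv :: "weights \<Rightarrow> weights" where
  "winv w = (case w of (p, q, r, s) \<Rightarrow>
     (p / (p\<^sup>2 - s\<^sup>2), q / (q\<^sup>2 - r\<^sup>2), - r / (q\<^sup>2 - r\<^sup>2), - s / (p\<^sup>2 - s\<^sup>2)))"

definition wtransp :: "weights \<Rightarrow> weights" where
  "wtransp w = (case w of (p, q, r, s) \<Rightarrow> (p, q, s, r))"

definition wscale :: "complex \<Rightarrow> weights \<Rightarrow> weights" where
  "wscale c w = (case w of (p, q, r, s) \<Rightarrow> (c * p, c * q, c * r, c * s))"

definition wantipode :: "weights \<Rightarrow> weights" where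
  "wantipode w = wtransp (winv w)"

lemma wmult_assoc: "wmult (wmult u v) w = wmult u (wmult v w)"
  by (cases u; cases v; cases w) (simp add: wmult_def algebra_simps)

lemma wmult_wone_left: "wmult wone w = w"
  by (cases w) (simp add: wmult_def wone_def)

lemma wmult_wone_right: "wmult w wone = w"
  by (cases w) (simp add: wmult_def wone_def)

lemma split_complex_inverse:
  fixes x y :: complex
  assumes "x\<^sup>2 - y\<^sup>2 \<noteq> 0"
  shows "x * (x / (x\<^sup>2 - y\<^sup>2)) + y * (- y / (x\<^sup>2 - y\<^sup>2)) = 1"
    and "x * (- y / (x\<^sup>2 - y\<^sup>2)) + y * (x / (x\<^sup>2 - y\<^sup>2)) = 0"
proof -
  have "D = x * x - y * y \<Longrightarrow> D \<noteq> 0 \<Longrightarrow> x * (x / D) + y * (- y / D) = 1" for D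
    by (simp add: field_simps)
  with assms show "x * (x / (x\<^sup>2 - y\<^sup>2)) + y * (- y / (x\<^sup>2 - y\<^sup>2)) = 1"
    by (simp add: power2_eq_square)
  show "x * (- y / (x\<^sup>2 - y\<^sup>2)) + y * (x / (x\<^sup>2 - y\<^sup>2)) = 0"
    by (simp add: algebra_simps)
qed

lemma wmult_winv:
  assumes "winvertible w"
  shows "wmult w (winv w) = wone" "wmult (winv w) w = wone"
proof -
  obtain p q r s where w: "w = (p, q, r, s)" by (cases w)
  have "p\<^sup>2 - s\<^sup>2 \<noteq> 0" "q\<^sup>2 - r\<^sup>2 \<noteq> 0" using assms by (auto simp: w winvertible_def)
  from this[THEN split_complex_inverse(1)] this[THEN split_complex_inverse(2)]
  show "wmult w (winv w) = wone" "wmult (winv w) w = wone"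
    by (simp_all add: w wmult_def winv_def wone_def ac_simps)
qed

lemma winvertible_if_right_inverse:
  assumes "wmult w w' = wone"
  shows "winvertible w"
proof -
  obtain p q r s where w: "w = (p, q, r, s)" by (cases w)
  obtain p' q' r' s' where w': "w' = (p', q', r', s')" by (cases w')
  have e: "p * p' + s * s' = 1" "q * q' + r * r' = 1" "q * r' + r * q' = 0" "p * s' + s * p' = 0"
    using assms by (auto simp: w w' wmult_def wone_def)
  have "(p\<^sup>2 - s\<^sup>2) * (p'\<^sup>2 - s'\<^sup>2) = (p * p' + s * s')\<^sup>2 - (p * s' + s * p')\<^sup>2"
    "(q\<^sup>2 - r\<^sup>2) * (q'\<^sup>2 - r'\<^sup>2) = (q * q' + r * r')\<^sup>2 - (q * r' + r * q')\<^sup>2"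
    by (simp_all add: algebra_simps power2_eq_square)
  with e show ?thesis by (auto simp: winvertible_def w)
qed

lemma wantipode_eqI:
  assumes "wmult w (wtransp w') = wone"
  shows "winvertible w" "wantipode w = w'"
proof -
  show inv: "winvertible w" by (rule winvertible_if_right_inverse[OF assms])
  have "winv w = wmult (wmult (winv w) w) (wtransp w')"
    by (simp add: wmult_assoc assms wmult_wone_right)
  also have "\<dots> = wtransp w'" by (simp add: wmult_winv(2)[OF inv] wmult_wone_left)
  finally show "wantipode w = w'"
    by (cases w') (simp add: wantipode_def wtransp_def)
qed

lemma local_mult_vertex: "local_mult (vertex w) (vertex w') = vertex (wmult w w')"
proof (intro ext)
  fix a b x y
  obtain p q r s where w: "w = (p, q, r, s)" by (cases w)
  obtain p' q' r' s' where w': "w' = (p', q', r', s')" by (cases w')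
  show "local_mult (vertex w) (vertex w') a b x y = vertex (wmult w w') a b x y"
    unfolding w w'
    by (cases a; cases b; cases x; cases y; simp add: local_mult_def vertex_def wmult_def UNIV_bool algebra_simps)
qed

lemma vertex_wone: "vertex wone = (\<lambda>a b x y. if x = y then (if a = b then 1 else 0) else 0)"
  by (auto simp: fun_eq_iff vertex_def wone_def)

lemma vertex_wtransp: "(\<lambda>a b. vertex w b a) = vertex (wtransp w)"
  by (cases w) (auto simp: fun_eq_iff vertex_def wtransp_def)

lemma vertex_wscale: "vertex (wscale c w) x y p q = c * vertex w x y p q"
  by (cases w) (simp add: vertex_def wscale_def)

lemma site_op_wone: "n < N \<Longrightarrow> meq N (site_op n (vertex wone)) mone"
  unfolding vertex_wone mone_eq_diag by (rule site_op_diag)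

lemma am_transp_site_op_vertex: "am_transp (site_op n (vertex w)) = site_op n (vertex (wtransp w))"
  by (simp add: am_transp_site_op vertex_wtransp)

lemma site_op_wscale: "site_op n (vertex (wscale c w)) = mscale c (site_op n (vertex w))"
  by (simp add: fun_eq_iff mscale_def site_op_def vertex_wscale)

section \<open>The RTT relation as an identity of operator matrices\<close>

definition in_fst :: "amat \<Rightarrow> (bool \<times> bool) opmat" where
  "in_fst X i j = (if snd i = snd j then X (fst i) (fst j) else (\<lambda>s t. 0))"

definition in_snd :: "amat \<Rightarrow> (bool \<times> bool) opmat" where
  "in_snd X i j = (if fst i = fst j then X (snd i) (snd j) else (\<lambda>s t. 0))"

definition R_op :: "complex \<Rightarrow> complex \<Rightarrow> (bool \<times> bool) opmat" where
  "R_op \<eta> z i j s t = (if s = t then Rmat \<eta> z (fst i) (snd i) (fst j) (snd j) else 0)"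

definition RTT_mat :: "complex \<Rightarrow> nat \<Rightarrow> (complex \<Rightarrow> amat) \<Rightarrow> complex \<Rightarrow> complex \<Rightarrow> bool" where
  "RTT_mat \<eta> N T l \<mu> \<longleftrightarrow>
     meq N (mmult N (R_op \<eta> (l - \<mu>)) (mmult N (in_fst (T l)) (in_snd (T \<mu>))))
           (mmult N (mmult N (in_snd (T \<mu>)) (in_fst (T l))) (R_op \<eta> (l - \<mu>)))"

lemma UNIV_bool_pair: "(UNIV::(bool \<times> bool) set) = {(False, False), (False, True), (True, False), (True, True)}"
  by auto

lemma sum_UNIV_bool_pair: "(\<Sum>j\<in>(UNIV::(bool \<times> bool) set). f j) = (\<Sum>e\<in>UNIV. \<Sum>g\<in>UNIV. f (e, g))"
  by (simp add: UNIV_bool_pair UNIV_bool add.assoc)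

lemma mmult_in_fst_in_snd:
  "mmult N (in_fst X) (in_snd Y) i k = op_mult N (X (fst i) (fst k)) (Y (snd i) (snd k))"
  unfolding fun_eq_iff mmult_def
  by (cases i; cases k) (auto simp: UNIV_bool_pair in_fst_def in_snd_def)

lemma mmult_in_snd_in_fst:
  "mmult N (in_snd Y) (in_fst X) i k = op_mult N (Y (snd i) (snd k)) (X (fst i) (fst k))"
  unfolding fun_eq_iff mmult_def
  by (cases i; cases k) (auto simp: UNIV_bool_pair in_fst_def in_snd_def)

lemma mmult_in_fst: "mmult N (in_fst X) (in_fst Y) = in_fst (mmult N X Y)"
  by (auto simp: fun_eq_iff mmult_def UNIV_bool_pair UNIV_bool in_fst_def)

lemma mmult_in_snd: "mmult N (in_snd X) (in_snd Y) = in_snd (mmult N X Y)"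
  by (auto simp: fun_eq_iff mmult_def UNIV_bool_pair UNIV_bool in_snd_def)

lemma in_fst_cong: "meq N X X' \<Longrightarrow> meq N (in_fst X) (in_fst X')"
  unfolding meq_def in_fst_def by auto

lemma in_snd_cong: "meq N X X' \<Longrightarrow> meq N (in_snd X) (in_snd X')"
  unfolding meq_def in_snd_def by auto

lemma commuting_in_fst_in_snd:
  "commuting N X Y \<Longrightarrow> meq N (mmult N (in_fst X) (in_snd Y)) (mmult N (in_snd Y) (in_fst X))"
  unfolding meq_def commuting_def mmult_in_fst_in_snd mmult_in_snd_in_fst by auto

lemma RTT_if_RTT_mat:
  assumes "RTT_mat \<eta> N T l \<mu>"
  shows "RTT \<eta> N T l \<mu>"
  unfolding RTT_def
proof (intro allI ballI)
  fix a c b d s t assume s: "s \<in> states N" and t: "t \<in> states N"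
  have "mmult N (R_op \<eta> (l - \<mu>)) (mmult N (in_fst (T l)) (in_snd (T \<mu>))) (a, c) (b, d) s t =
     (\<Sum>e\<in>UNIV. \<Sum>f\<in>UNIV. Rmat \<eta> (l - \<mu>) a c e f * op_mult N (T l e b) (T \<mu> f d) s t)"
    unfolding mmult_def[of N "R_op \<eta> (l - \<mu>)"] R_op_def op_mult_diag_left[OF s] mmult_in_fst_in_snd sum_UNIV_bool_pair
    by simp
  moreover have "mmult N (mmult N (in_snd (T \<mu>)) (in_fst (T l))) (R_op \<eta> (l - \<mu>)) (a, c) (b, d) s t =
     (\<Sum>e\<in>UNIV. \<Sum>f\<in>UNIV. op_mult N (T \<mu> c e) (T l a f) s t * Rmat \<eta> (l - \<mu>) f e b d)"
    unfolding mmult_def[of N _ "R_op \<eta> (l - \<mu>)"] R_op_def op_mult_diag_right[OF t]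
      mmult_in_snd_in_fst sum_UNIV_bool_pair
    by (simp add: UNIV_bool)
  ultimately show "(\<Sum>e\<in>UNIV. \<Sum>f\<in>UNIV. Rmat \<eta> (l - \<mu>) a c e f * op_mult N (T l e b) (T \<mu> f d) s t) =
      (\<Sum>e\<in>UNIV. \<Sum>f\<in>UNIV. op_mult N (T \<mu> c e) (T l a f) s t * Rmat \<eta> (l - \<mu>) f e b d)"
    using assms s t unfolding RTT_mat_def meq_def by metis
qed

lemma RTT_mat_cong:
  assumes "RTT_mat \<eta> N P l \<mu>" "meq N (P l) (P' l)" "meq N (P \<mu>) (P' \<mu>)"
  shows "RTT_mat \<eta> N P' l \<mu>"
proof -
  have "meq N (mmult N (R_op \<eta> (l - \<mu>)) (mmult N (in_fst (P' l)) (in_snd (P' \<mu>))))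
      (mmult N (R_op \<eta> (l - \<mu>)) (mmult N (in_fst (P l)) (in_snd (P \<mu>))))"
    by (rule meq_sym, intro mmult_cong meq_refl in_fst_cong in_snd_cong assms(2,3))
  also have "meq N \<dots> (mmult N (mmult N (in_snd (P \<mu>)) (in_fst (P l))) (R_op \<eta> (l - \<mu>)))"
    using assms(1) unfolding RTT_mat_def .
  also have "meq N \<dots> (mmult N (mmult N (in_snd (P' \<mu>)) (in_fst (P' l))) (R_op \<eta> (l - \<mu>)))"
    by (intro mmult_cong meq_refl in_fst_cong in_snd_cong assms(2,3))
  finally show ?thesis unfolding RTT_mat_def .
qed

lemma RTT_mat_mone: "RTT_mat \<eta> N (\<lambda>z. mone) l \<mu>"
proof -
  have "in_fst mone = mone" "in_snd mone = mone"
    by (auto simp: fun_eq_iff in_fst_def in_snd_def mone_def prod_eq_iff)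
  moreover have "meq N (mmult N (R_op \<eta> (l - \<mu>)) (mmult N mone mone)) (R_op \<eta> (l - \<mu>))"
    using mmult_cong[OF meq_refl mmult_one_left] mmult_one_right by (rule meq_trans)
  moreover have "meq N (mmult N (mmult N mone mone) (R_op \<eta> (l - \<mu>))) (R_op \<eta> (l - \<mu>))"
    using mmult_cong[OF mmult_one_left meq_refl] mmult_one_left by (rule meq_trans)
  ultimately show ?thesis unfolding RTT_mat_def using meq_trans meq_sym by metis
qed

text \<open>The standard argument: move the entries of \<open>S(\<lambda>)\<close> past those of \<open>P(\<mu>)\<close>, then
  pass \<open>R\<close> through the \<open>P\<close>-factors and then through the \<open>S\<close>-factors.\<close>

lemma RTT_mat_mmult:
  assumes P: "RTT_mat \<eta> N P l \<mu>" and S: "RTT_mat \<eta> N S l \<mu>"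
    and c1: "commuting N (S l) (P \<mu>)" and c2: "commuting N (P l) (S \<mu>)"
  shows "RTT_mat \<eta> N (\<lambda>z. mmult N (P z) (S z)) l \<mu>"
proof -
  let ?A = "in_fst (P l)" and ?B = "in_fst (S l)" and ?C = "in_snd (P \<mu>)" and ?D = "in_snd (S \<mu>)"
    and ?R = "R_op \<eta> (l - \<mu>)"
  have "meq N (mmult N ?R (mmult N (mmult N ?A ?B) (mmult N ?C ?D)))
      (mmult N ?R (mmult N ?A (mmult N (mmult N ?B ?C) ?D)))"
    by (simp only: mmult_assoc meq_refl)
  also have "meq N \<dots> (mmult N ?R (mmult N ?A (mmult N (mmult N ?C ?B) ?D)))"
    by (intro mmult_cong meq_refl commuting_in_fst_in_snd c1)
  also have "meq N \<dots> (mmult N (mmult N ?R (mmult N ?A ?C)) (mmult N ?B ?D))"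
    by (simp only: mmult_assoc meq_refl)
  also have "meq N \<dots> (mmult N (mmult N (mmult N ?C ?A) ?R) (mmult N ?B ?D))"
    using P unfolding RTT_mat_def by (rule mmult_cong[OF _ meq_refl])
  also have "meq N \<dots> (mmult N (mmult N ?C ?A) (mmult N ?R (mmult N ?B ?D)))"
    by (simp only: mmult_assoc meq_refl)
  also have "meq N \<dots> (mmult N (mmult N ?C ?A) (mmult N (mmult N ?D ?B) ?R))"
    using S unfolding RTT_mat_def by (rule mmult_cong[OF meq_refl])
  also have "meq N \<dots> (mmult N ?C (mmult N (mmult N ?A ?D) (mmult N ?B ?R)))"
    by (simp only: mmult_assoc meq_refl)
  also have "meq N \<dots> (mmult N ?C (mmult N (mmult N ?D ?A) (mmult N ?B ?R)))"
    by (intro mmult_cong meq_refl commuting_in_fst_in_snd c2)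
  also have "meq N \<dots> (mmult N (mmult N (mmult N ?C ?D) (mmult N ?A ?B)) ?R)"
    by (simp only: mmult_assoc meq_refl)
  finally show ?thesis unfolding RTT_mat_def mmult_in_fst[symmetric] mmult_in_snd[symmetric] .
qed

lemma RTT_scale:
  assumes "RTT \<eta> N P l \<mu>"
  shows "RTT \<eta> N (\<lambda>z a b s t. k z * P z a b s t) l \<mu>"
proof -
  have "(\<Sum>e\<in>UNIV. \<Sum>f\<in>UNIV. Rmat \<eta> (l - \<mu>) a c e f *
          op_mult N (\<lambda>s t. k l * P l e b s t) (\<lambda>s t. k \<mu> * P \<mu> f d s t) s t)
      = k l * k \<mu> * (\<Sum>e\<in>UNIV. \<Sum>f\<in>UNIV. Rmat \<eta> (l - \<mu>) a c e f * op_mult N (P l e b) (P \<mu> f d) s t)"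
    "(\<Sum>e\<in>UNIV. \<Sum>f\<in>UNIV. op_mult N (\<lambda>s t. k \<mu> * P \<mu> c e s t) (\<lambda>s t. k l * P l a f s t) s t *
          Rmat \<eta> (l - \<mu>) f e b d)
      = k l * k \<mu> * (\<Sum>e\<in>UNIV. \<Sum>f\<in>UNIV. op_mult N (P \<mu> c e) (P l a f) s t * Rmat \<eta> (l - \<mu>) f e b d)"
    for a b c d s t
    by (simp_all add: op_mult_scale sum_distrib_left ac_simps)
  with assms show ?thesis unfolding RTT_def by simp
qed

section \<open>The local Yang-Baxter equation\<close>

definition local_in_fst :: "bool locmat \<Rightarrow> (bool \<times> bool) locmat" where
  "local_in_fst x i j p q = (if snd i = snd j then x (fst i) (fst j) p q else 0)"

definition local_in_snd :: "bool locmat \<Rightarrow> (bool \<times> bool) locmat" where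
  "local_in_snd x i j p q = (if fst i = fst j then x (snd i) (snd j) p q else 0)"

definition local_R :: "complex \<Rightarrow> complex \<Rightarrow> (bool \<times> bool) locmat" where
  "local_R b c i j p q = (if p = q then vertex (1, b, c, 0) (fst i) (fst j) (snd i) (snd j) else 0)"

lemma in_fst_site_op: "in_fst (site_op n x) = site_op n (local_in_fst x)"
  by (auto simp: fun_eq_iff in_fst_def local_in_fst_def site_op_def)

lemma in_snd_site_op: "in_snd (site_op n x) = site_op n (local_in_snd x)"
  by (auto simp: fun_eq_iff in_snd_def local_in_snd_def site_op_def)

lemma Rmat_eq_vertex: "Rmat \<eta> z a1 a2 b1 b2 = vertex (1, bfun \<eta> z, cfun \<eta> z, 0) a1 b1 a2 b2"
  by (cases a1; cases a2; cases b1; cases b2) (simp_all add: Rmat_def vertex_def)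

lemma R_op_eq_site_op: "n < N \<Longrightarrow> meq N (R_op \<eta> z) (site_op n (local_R (bfun \<eta> z) (cfun \<eta> z)))"
proof -
  assume "n < N"
  have "local_R (bfun \<eta> z) (cfun \<eta> z)
      = (\<lambda>i j p q. if p = q then Rmat \<eta> z (fst i) (snd i) (fst j) (snd j) else 0)"
    by (simp add: fun_eq_iff local_R_def Rmat_eq_vertex)
  moreover have "R_op \<eta> z = (\<lambda>i j s t. if s = t then Rmat \<eta> z (fst i) (snd i) (fst j) (snd j) else 0)"
    by (simp add: fun_eq_iff R_op_def)
  ultimately show ?thesis
    using meq_sym[OF site_op_diag[OF \<open>n < N\<close>, of "\<lambda>i j. Rmat \<eta> z (fst i) (snd i) (fst j) (snd j)"]]
    by simp
qed

lemma local_YBE_R: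
  assumes "b1 * c2 = C * b2 * c1 + B * c2" "c1 = B * b2 * c1 + C * c2" "C * b1 = B * c1 * c2 + C * b2"
  shows "local_mult (local_R B C)
           (local_mult (local_in_fst (vertex (1, b1, c1, 0))) (local_in_snd (vertex (1, b2, c2, 0)))) =
         local_mult
           (local_mult (local_in_snd (vertex (1, b2, c2, 0))) (local_in_fst (vertex (1, b1, c1, 0))))
           (local_R B C)"
proof (intro ext)
  fix i j :: "bool \<times> bool" and p q :: bool
  obtain a c b d where ij: "i = (a, c)" "j = (b, d)" by fastforce
  show "local_mult (local_R B C)
           (local_mult (local_in_fst (vertex (1, b1, c1, 0))) (local_in_snd (vertex (1, b2, c2, 0)))) i j p q =
         local_mult
           (local_mult (local_in_snd (vertex (1, b2, c2, 0))) (local_in_fst (vertex (1, b1, c1, 0))))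
           (local_R B C) i j p q"
    unfolding ij
    by (cases a; cases c; cases b; cases d; cases p; cases q;
        simp add: local_mult_def sum_UNIV_bool_pair UNIV_bool vertex_def local_in_fst_def
          local_in_snd_def local_R_def;
        (use assms in algebra)?)
qed

lemma local_YBE_Rt:
  assumes "c2 = C * c1 + B * b1 * c2" "b2 * c1 = B * c1 + C * b1 * c2" "B * c1 * c2 + C * b1 = C * b2"
  shows "local_mult (local_R B C)
           (local_mult (local_in_fst (vertex (1, b1, 0, c1))) (local_in_snd (vertex (1, b2, 0, c2)))) =
         local_mult
           (local_mult (local_in_snd (vertex (1, b2, 0, c2))) (local_in_fst (vertex (1, b1, 0, c1))))
           (local_R B C)"
proof (intro ext)
  fix i j :: "bool \<times> bool" and p q :: bool
  obtain a c b d where ij: "i = (a, c)" "j = (b, d)" by fastforce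
  show "local_mult (local_R B C)
           (local_mult (local_in_fst (vertex (1, b1, 0, c1))) (local_in_snd (vertex (1, b2, 0, c2)))) i j p q =
         local_mult
           (local_mult (local_in_snd (vertex (1, b2, 0, c2))) (local_in_fst (vertex (1, b1, 0, c1))))
           (local_R B C) i j p q"
    unfolding ij
    by (cases a; cases c; cases b; cases d; cases p; cases q;
        simp add: local_mult_def sum_UNIV_bool_pair UNIV_bool vertex_def local_in_fst_def
          local_in_snd_def local_R_def;
        (use assms in algebra)?)
qed

lemma six_vertex_YBE_weights:
  fixes l \<mu> \<xi> \<eta> :: complex
  assumes "sinh (l - \<mu> + \<eta>) \<noteq> 0" "sinh (l - \<xi> + \<eta>) \<noteq> 0" "sinh (\<mu> - \<xi> + \<eta>) \<noteq> 0"
  shows "bfun \<eta> (l - \<xi>) * cfun \<eta> (\<mu> - \<xi>)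
           = cfun \<eta> (l - \<mu>) * bfun \<eta> (\<mu> - \<xi>) * cfun \<eta> (l - \<xi>) + bfun \<eta> (l - \<mu>) * cfun \<eta> (\<mu> - \<xi>)"
    and "cfun \<eta> (l - \<xi>)
           = bfun \<eta> (l - \<mu>) * bfun \<eta> (\<mu> - \<xi>) * cfun \<eta> (l - \<xi>) + cfun \<eta> (l - \<mu>) * cfun \<eta> (\<mu> - \<xi>)"
    and "cfun \<eta> (l - \<mu>) * bfun \<eta> (l - \<xi>)
           = bfun \<eta> (l - \<mu>) * cfun \<eta> (l - \<xi>) * cfun \<eta> (\<mu> - \<xi>) + cfun \<eta> (l - \<mu>) * bfun \<eta> (\<mu> - \<xi>)"
  using assms unfolding bfun_def cfun_def
  apply (simp_all add: field_simps)
  apply (thin_tac _)+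
  apply (unfold sinh_field_def exp_minus exp_add exp_diff)
  apply (simp add: field_simps, (simp add: algebra_simps power2_eq_square)?)
  apply (thin_tac _)+
  apply (simp add: field_simps, (simp add: algebra_simps power2_eq_square)?)
  apply (thin_tac _)+
  apply (simp add: field_simps, (simp add: algebra_simps power2_eq_square)?)
  done

lemma six_vertex_YBE_weights_crossed:
  fixes l \<mu> \<xi> \<eta> :: complex
  assumes "sinh (l - \<mu> + \<eta>) \<noteq> 0" "sinh (- l - \<xi> + \<eta>) \<noteq> 0" "sinh (- \<mu> - \<xi> + \<eta>) \<noteq> 0"
  shows "cfun \<eta> (- \<mu> - \<xi>)
           = cfun \<eta> (l - \<mu>) * cfun \<eta> (- l - \<xi>) + bfun \<eta> (l - \<mu>) * bfun \<eta> (- l - \<xi>) * cfun \<eta> (- \<mu> - \<xi>)"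
    and "bfun \<eta> (- \<mu> - \<xi>) * cfun \<eta> (- l - \<xi>)
           = bfun \<eta> (l - \<mu>) * cfun \<eta> (- l - \<xi>) + cfun \<eta> (l - \<mu>) * bfun \<eta> (- l - \<xi>) * cfun \<eta> (- \<mu> - \<xi>)"
    and "bfun \<eta> (l - \<mu>) * cfun \<eta> (- l - \<xi>) * cfun \<eta> (- \<mu> - \<xi>) + cfun \<eta> (l - \<mu>) * bfun \<eta> (- l - \<xi>)
           = cfun \<eta> (l - \<mu>) * bfun \<eta> (- \<mu> - \<xi>)"
  using assms unfolding bfun_def cfun_def
  apply (simp_all add: field_simps)
  apply (thin_tac _)+
  apply (unfold sinh_field_def exp_minus exp_add exp_diff)
  apply (simp add: field_simps, (simp add: algebra_simps power2_eq_square)?)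
  apply (thin_tac _)+
  apply (simp add: field_simps, (simp add: algebra_simps power2_eq_square)?)
  apply (thin_tac _)+
  apply (simp add: field_simps, (simp add: algebra_simps power2_eq_square)?)
  done

lemma RTT_mat_site_op:
  assumes n: "n < N"
    and YBE: "local_mult (local_R (bfun \<eta> (l - \<mu>)) (cfun \<eta> (l - \<mu>)))
                (local_mult (local_in_fst (x l)) (local_in_snd (x \<mu>))) =
              local_mult (local_mult (local_in_snd (x \<mu>)) (local_in_fst (x l)))
                (local_R (bfun \<eta> (l - \<mu>)) (cfun \<eta> (l - \<mu>)))"
  shows "RTT_mat \<eta> N (\<lambda>z. site_op n (x z)) l \<mu>"
proof -
  let ?R = "local_R (bfun \<eta> (l - \<mu>)) (cfun \<eta> (l - \<mu>))"
    and ?A = "local_in_fst (x l)" and ?B = "local_in_snd (x \<mu>)"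
  have "meq N (mmult N (R_op \<eta> (l - \<mu>)) (mmult N (site_op n ?A) (site_op n ?B)))
      (mmult N (site_op n ?R) (site_op n (local_mult ?A ?B)))"
    by (intro mmult_cong R_op_eq_site_op mmult_site_op_same n)
  also have "meq N \<dots> (site_op n (local_mult ?R (local_mult ?A ?B)))"
    by (intro mmult_site_op_same n)
  also have "\<dots> = site_op n (local_mult (local_mult ?B ?A) ?R)"
    using YBE by simp
  also have "meq N \<dots> (mmult N (site_op n (local_mult ?B ?A)) (site_op n ?R))"
    by (rule meq_sym, rule mmult_site_op_same, rule n)
  also have "meq N \<dots> (mmult N (mmult N (site_op n ?B) (site_op n ?A)) (R_op \<eta> (l - \<mu>)))"
    by (intro mmult_cong; rule meq_sym; intro mmult_site_op_same R_op_eq_site_op n)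
  finally show ?thesis unfolding RTT_mat_def in_fst_site_op in_snd_site_op .
qed

section \<open>The transposed quantum transfer matrix as a product of vertices\<close>

definition qtm_local :: "complex \<Rightarrow> real \<Rightarrow> nat \<Rightarrow> complex \<Rightarrow> nat \<Rightarrow> bool locmat" where
  "qtm_local \<eta> \<beta> N l m = (if even m then (\<lambda>a b p q. Rmat \<eta> (- bN \<beta> N - l) p b q a)
                                     else (\<lambda>a b p q. Rmat \<eta> (l - bN \<beta> N) a p b q))"

definition tplus_weights :: "complex \<Rightarrow> real \<Rightarrow> nat \<Rightarrow> complex \<Rightarrow> nat \<Rightarrow> weights" where
  "tplus_weights \<eta> \<beta> N z m = (if even m then (1, bfun \<eta> (z - bN \<beta> N), cfun \<eta> (z - bN \<beta> N), 0)
                                         else (1, bfun \<eta> (- z - bN \<beta> N), 0, cfun \<eta> (- z - bN \<beta> N)))"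

text \<open>Weights are indexed by the site number \<open>i \<ge> 1\<close> of the paper; that site is the list
  position \<open>i - 1\<close> of a basis state.\<close>

fun vprod :: "nat \<Rightarrow> (nat \<Rightarrow> weights) \<Rightarrow> nat \<Rightarrow> amat" where
  "vprod N w 0 = mone"
| "vprod N w (Suc m) = mmult N (vprod N w m) (site_op m (vertex (w (Suc m))))"

fun vprod_rev :: "nat \<Rightarrow> (nat \<Rightarrow> weights) \<Rightarrow> nat \<Rightarrow> amat" where
  "vprod_rev N w 0 = mone"
| "vprod_rev N w (Suc m) = mmult N (site_op m (vertex (w (Suc m)))) (vprod_rev N w m)"

lemma qtm_site_eq_site_op: "qtm_site \<eta> \<beta> N m l = site_op (m - 1) (qtm_local \<eta> \<beta> N l m)"
  by (auto simp: fun_eq_iff qtm_site_def qtm_local_def Ltil_def Lop_def site_op_def)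

lemma am_transp_qtm_site:
  "am_transp (site_op n (qtm_local \<eta> \<beta> N (- z) m)) = site_op n (vertex (tplus_weights \<eta> \<beta> N z m))"
proof -
  have "(\<lambda>a b. qtm_local \<eta> \<beta> N (- z) m b a) = vertex (tplus_weights \<eta> \<beta> N z m)"
  proof (intro ext)
    fix a b p q
    show "qtm_local \<eta> \<beta> N (- z) m b a p q = vertex (tplus_weights \<eta> \<beta> N z m) a b p q"
      by (cases "even m"; cases a; cases b; cases p; cases q;
          simp add: qtm_local_def tplus_weights_def Rmat_def vertex_def)
  qed
  thus ?thesis by (simp add: am_transp_site_op)
qed

lemma commuting_site_op_vprod: "m \<le> n \<Longrightarrow> n < N \<Longrightarrow> commuting N (site_op n x) (vprod N w m)"
  by (induction m) (auto intro!: commuting_mmult commuting_site_op_distinct simp: commuting_mone)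
lemma commuting_site_op_vprod_rev: "m \<le> n \<Longrightarrow> n < N \<Longrightarrow> commuting N (site_op n x) (vprod_rev N w m)"
  by (induction m) (auto intro!: commuting_mmult commuting_site_op_distinct simp: commuting_mone)

lemma commuting_site_op_qtm_prod: "m \<le> n \<Longrightarrow> n < N \<Longrightarrow> commuting N (site_op n x) (qtm_prod \<eta> \<beta> N m l)"
  by (induction m)
     (auto intro!: commuting_mmult commuting_site_op_distinct
       simp: commuting_mone am_id_eq_mone am_mult_eq_mmult qtm_site_eq_site_op)

lemma am_transp_qtm_prod:
  "m \<le> N \<Longrightarrow> meq N (am_transp (qtm_prod \<eta> \<beta> N m (- z))) (vprod N (tplus_weights \<eta> \<beta> N z) m)"
proof (induction m)
  case 0
  show ?case by (simp add: am_id_eq_mone meq_def am_transp_def mone_def)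
next
  case (Suc m)
  hence m: "m < N" by simp
  have "meq N (am_transp (qtm_prod \<eta> \<beta> N (Suc m) (- z)))
      (am_transp (mmult N (site_op m (qtm_local \<eta> \<beta> N (- z) (Suc m))) (qtm_prod \<eta> \<beta> N m (- z))))"
    by (simp add: am_mult_eq_mmult qtm_site_eq_site_op)
  also have "meq N \<dots> (mmult N (am_transp (qtm_prod \<eta> \<beta> N m (- z)))
      (site_op m (vertex (tplus_weights \<eta> \<beta> N z (Suc m)))))"
    unfolding am_transp_qtm_site[symmetric]
    by (rule am_transp_mmult, rule commuting_site_op_qtm_prod) (use m in auto)
  also have "meq N \<dots> (vprod N (tplus_weights \<eta> \<beta> N z) (Suc m))"
    unfolding vprod.simps using Suc m by (intro mmult_cong meq_refl) auto
  finally show ?case .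
qed

lemma Tplus_eq_transp_TQTM:
  "Tplus \<eta> \<beta> N = (\<lambda>z a b s t. inverse (afun \<eta> \<beta> N (- z)) * am_transp (TQTM \<eta> \<beta> N (- z)) a b s t)"
  by (simp add: fun_eq_iff Tplus_def TQTMt_def am_transp_def divide_inverse mult.commute)

lemma Tplus_eq_vprod:
  "meq N (Tplus \<eta> \<beta> N z) (mscale (inverse (afun \<eta> \<beta> N (- z))) (vprod N (tplus_weights \<eta> \<beta> N z) N))"
proof -
  have "Tplus \<eta> \<beta> N z = mscale (inverse (afun \<eta> \<beta> N (- z))) (am_transp (qtm_prod \<eta> \<beta> N N (- z)))"
    by (simp add: Tplus_eq_transp_TQTM fun_eq_iff mscale_def TQTM_def)
  thus ?thesis by (simp add: mscale_cong am_transp_qtm_prod)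
qed

lemma generic_sinh_nonzero:
  assumes "generic \<eta> \<beta> N l" "\<bar>k\<bar> \<le> 3"
  shows "sinh (l - bN \<beta> N + of_int k * \<eta>) \<noteq> 0"
    and "sinh (- l - bN \<beta> N + of_int k * \<eta>) \<noteq> 0"
proof -
  from assms(2) have "- 3 \<le> - k \<and> - k \<le> 3" "- 3 \<le> k \<and> k \<le> 3" by auto
  with assms(1) have "sinh (l + bN \<beta> N + of_int (- k) * \<eta>) \<noteq> 0"
      and "sinh (l - bN \<beta> N + of_int k * \<eta>) \<noteq> 0"
    unfolding generic_def by blast+
  moreover have "sinh (- l - bN \<beta> N + of_int k * \<eta>) = - sinh (l + bN \<beta> N + of_int (- k) * \<eta>)"
    by (simp flip: sinh_minus add: algebra_simps)
  ultimately show "sinh (l - bN \<beta> N + of_int k * \<eta>) \<noteq> 0"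
    and "sinh (- l - bN \<beta> N + of_int k * \<eta>) \<noteq> 0"
    by auto
qed

lemma generic_sinh_shifts_nonzero:
  assumes "generic \<eta> \<beta> N l"
  shows "sinh (l - bN \<beta> N) \<noteq> 0" "sinh (l - bN \<beta> N + \<eta>) \<noteq> 0"
    "sinh (l - bN \<beta> N - \<eta>) \<noteq> 0" "sinh (l - bN \<beta> N - 2 * \<eta>) \<noteq> 0"
    "sinh (- l - bN \<beta> N) \<noteq> 0" "sinh (- l - bN \<beta> N + \<eta>) \<noteq> 0"
    "sinh (- l - bN \<beta> N + 2 * \<eta>) \<noteq> 0" "sinh (- l - bN \<beta> N + 3 * \<eta>) \<noteq> 0"
  using generic_sinh_nonzero[OF assms, of 0] generic_sinh_nonzero[OF assms, of 1]
    generic_sinh_nonzero[OF assms, of "-1"] generic_sinh_nonzero[OF assms, of "-2"]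
    generic_sinh_nonzero[OF assms, of 2] generic_sinh_nonzero[OF assms, of 3]
  by (simp_all add: algebra_simps)

lemma RTT_mat_tplus_site:
  assumes m: "m < N" and gen: "generic \<eta> \<beta> N l" "generic \<eta> \<beta> N \<mu>" and "sinh (l - \<mu> + \<eta>) \<noteq> 0"
  shows "RTT_mat \<eta> N (\<lambda>z. site_op m (vertex (tplus_weights \<eta> \<beta> N z (Suc m)))) l \<mu>"
proof (rule RTT_mat_site_op[OF m])
  from assms show "local_mult (local_R (bfun \<eta> (l - \<mu>)) (cfun \<eta> (l - \<mu>)))
     (local_mult (local_in_fst (vertex (tplus_weights \<eta> \<beta> N l (Suc m))))
       (local_in_snd (vertex (tplus_weights \<eta> \<beta> N \<mu> (Suc m))))) =
    local_mult (local_mult (local_in_snd (vertex (tplus_weights \<eta> \<beta> N \<mu> (Suc m))))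
       (local_in_fst (vertex (tplus_weights \<eta> \<beta> N l (Suc m)))))
     (local_R (bfun \<eta> (l - \<mu>)) (cfun \<eta> (l - \<mu>)))"
    unfolding tplus_weights_def
    by (auto intro!: local_YBE_R local_YBE_Rt six_vertex_YBE_weights six_vertex_YBE_weights_crossed
        generic_sinh_shifts_nonzero)
qed

lemma RTT_mat_vprod_tplus_weights:
  assumes "m \<le> N" "generic \<eta> \<beta> N l" "generic \<eta> \<beta> N \<mu>" "sinh (l - \<mu> + \<eta>) \<noteq> 0"
  shows "RTT_mat \<eta> N (\<lambda>z. vprod N (tplus_weights \<eta> \<beta> N z) m) l \<mu>"
  using assms(1)
proof (induction m)
  case 0
  show ?case by (simp add: RTT_mat_mone)
next
  case (Suc m)
  hence m: "m < N" by simp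
  show ?case unfolding vprod.simps
    by (rule RTT_mat_mmult)
       (use Suc m assms(2-4) in \<open>auto intro: RTT_mat_tplus_site commuting_site_op_vprod commuting_sym\<close>)
qed

lemma RTT_Tplus:
  assumes "generic \<eta> \<beta> N l" "generic \<eta> \<beta> N \<mu>" "sinh (l - \<mu> + \<eta>) \<noteq> 0"
  shows "RTT \<eta> N (Tplus \<eta> \<beta> N) l \<mu>"
proof -
  have "RTT_mat \<eta> N (\<lambda>z. am_transp (TQTM \<eta> \<beta> N (- z))) l \<mu>"
    by (rule RTT_mat_cong[OF RTT_mat_vprod_tplus_weights[OF le_refl assms]])
       (unfold TQTM_def, (rule meq_sym, rule am_transp_qtm_prod, rule le_refl)+)
  thus ?thesis unfolding Tplus_eq_transp_TQTM by (intro RTT_scale RTT_if_RTT_mat)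
qed

section \<open>Inverses and antipodes of products of vertices\<close>

lemma am_is_inverse_iff: "am_is_inverse N X Y \<longleftrightarrow> meq N (mmult N X Y) mone \<and> meq N (mmult N Y X) mone"
  by (simp add: am_is_inverse_def am_eq_eq_meq am_mult_eq_mmult am_id_eq_mone)

lemma am_is_inverse_cong:
  assumes "am_is_inverse N X Y" "meq N X X'" "meq N Y Y'"
  shows "am_is_inverse N X' Y'"
proof -
  have "meq N X' X" "meq N Y' Y" using assms(2,3) by (auto simp: meq_sym)
  with assms(1) show ?thesis unfolding am_is_inverse_iff by (meson meq_trans mmult_cong)
qed

lemma am_is_inverse_mone: "am_is_inverse N mone mone"
  by (simp add: am_is_inverse_iff mmult_one_left)

lemma am_is_inverse_mmult:
  assumes "am_is_inverse N A A'" "am_is_inverse N B B'"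
  shows "am_is_inverse N (mmult N A B) (mmult N B' A')"
proof -
  have "meq N (mmult N (mmult N X Y) (mmult N Y' X')) mone"
    if "meq N (mmult N X X') mone" "meq N (mmult N Y Y') mone" for X X' Y Y' :: amat
  proof -
    have "meq N (mmult N (mmult N X Y) (mmult N Y' X')) (mmult N X (mmult N (mmult N Y Y') X'))"
      by (simp add: mmult_assoc)
    also have "meq N \<dots> (mmult N X (mmult N mone X'))"
      by (intro mmult_cong meq_refl that(2))
    also have "meq N \<dots> (mmult N X X')"
      by (intro mmult_cong meq_refl mmult_one_left)
    also have "meq N \<dots> mone" by (rule that(1))
    finally show ?thesis .
  qed
  with assms show ?thesis unfolding am_is_inverse_iff by blast
qed

lemma am_is_inverse_mscale:
  "am_is_inverse N X Y \<Longrightarrow> c \<noteq> 0 \<Longrightarrow> am_is_inverse N (mscale c X) (mscale (inverse c) Y)"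
  by (simp add: am_is_inverse_iff mmult_mscale mscale_one)

lemma am_is_inverse_site_op_vertex:
  assumes "n < N" "winvertible w"
  shows "am_is_inverse N (site_op n (vertex w)) (site_op n (vertex (winv w)))"
proof -
  have "meq N (mmult N (site_op n (vertex u)) (site_op n (vertex u'))) mone"
    if "wmult u u' = wone" for u u'
  proof -
    have "meq N (mmult N (site_op n (vertex u)) (site_op n (vertex u'))) (site_op n (vertex wone))"
      using mmult_site_op_same[OF assms(1), of "vertex u" "vertex u'"] by (simp only: local_mult_vertex that)
    thus ?thesis using site_op_wone[OF assms(1)] by (rule meq_trans)
  qed
  thus ?thesis unfolding am_is_inverse_iff using wmult_winv[OF assms(2)] by blast
qed

lemma am_is_inverse_vprod:
  assumes "m \<le> N" "\<forall>i\<in>{1..m}. winvertible (w i)"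
  shows "am_is_inverse N (vprod N w m) (vprod_rev N (\<lambda>i. winv (w i)) m)"
  using assms
proof (induction m)
  case 0
  show ?case by (simp add: am_is_inverse_mone)
next
  case (Suc m)
  have "am_is_inverse N (site_op m (vertex (w (Suc m)))) (site_op m (vertex (winv (w (Suc m)))))"
    using Suc.prems by (intro am_is_inverse_site_op_vertex) auto
  with Suc show ?case by (auto intro: am_is_inverse_mmult)
qed

lemma am_inv_eq:
  assumes "am_is_inverse N X Y"
  shows "meq N (am_inv N X) Y"
proof -
  have "am_is_inverse N X (am_inv N X)"
    using someI[of "am_is_inverse N X" Y, OF assms] unfolding am_inv_def .
  hence inv_X: "meq N (mmult N (am_inv N X) X) mone" by (simp add: am_is_inverse_iff)
  have X_Y: "meq N (mmult N X Y) mone" using assms by (simp add: am_is_inverse_iff)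
  have "meq N (am_inv N X) (mmult N (am_inv N X) mone)"
    by (rule meq_sym, rule mmult_one_right)
  also have "meq N \<dots> (mmult N (am_inv N X) (mmult N X Y))"
    by (rule mmult_cong[OF meq_refl meq_sym[OF X_Y]])
  also have "meq N \<dots> (mmult N (mmult N (am_inv N X) X) Y)"
    by (simp add: mmult_assoc)
  also have "meq N \<dots> (mmult N mone Y)"
    by (rule mmult_cong[OF inv_X meq_refl])
  also have "meq N \<dots> Y" by (rule mmult_one_left)
  finally show ?thesis .
qed

lemma am_transp_vprod_rev:
  "m \<le> N \<Longrightarrow> meq N (am_transp (vprod_rev N w m)) (vprod N (\<lambda>i. wtransp (w i)) m)"
proof (induction m)
  case 0
  show ?case by (simp add: meq_def am_transp_def mone_def)
next
  case (Suc m)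
  hence m: "m < N" by simp
  have "meq N (am_transp (vprod_rev N w (Suc m)))
      (mmult N (am_transp (vprod_rev N w m)) (am_transp (site_op m (vertex (w (Suc m))))))"
    unfolding vprod_rev.simps by (rule am_transp_mmult, rule commuting_site_op_vprod_rev) (use m in auto)
  also have "meq N \<dots> (vprod N (\<lambda>i. wtransp (w i)) (Suc m))"
    unfolding am_transp_site_op_vertex vprod.simps using Suc m by (intro mmult_cong meq_refl) auto
  finally show ?case .
qed

text \<open>Inversion reverses the order of the product and the transposition restores it.\<close>

lemma antipode_vprod:
  assumes "c \<noteq> 0" "\<forall>i\<in>{1..N}. winvertible (w i)" "meq N X (mscale c (vprod N w N))"
  shows "am_invertible N X"
    and "meq N (antipode N X) (mscale (inverse c) (vprod N (\<lambda>i. wantipode (w i)) N))"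
proof -
  let ?Y = "mscale (inverse c) (vprod_rev N (\<lambda>i. winv (w i)) N)"
  have "am_is_inverse N X ?Y"
    using am_is_inverse_mscale[OF am_is_inverse_vprod[OF le_refl assms(2)] assms(1)] meq_sym[OF assms(3)]
    by (rule am_is_inverse_cong) simp
  thus "am_invertible N X" unfolding am_invertible_def by blast
  have "meq N (antipode N X) (am_transp ?Y)"
    unfolding antipode_def by (rule am_transp_cong, rule am_inv_eq) fact
  also have "meq N \<dots> (mscale (inverse c) (vprod N (\<lambda>i. wantipode (w i)) N))"
    unfolding am_transp_mscale wantipode_def by (rule mscale_cong, rule am_transp_vprod_rev, rule le_refl)
  finally show "meq N (antipode N X) (mscale (inverse c) (vprod N (\<lambda>i. wantipode (w i)) N))" .
qed

lemma vprod_wscale: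
  "m \<le> N \<Longrightarrow> meq N (vprod N (\<lambda>i. wscale (d i) (w i)) m) (mscale (\<Prod>i\<in>{1..m}. d i) (vprod N w m))"
proof (induction m)
  case 0
  show ?case by (simp add: mscale_one)
next
  case (Suc m)
  have "meq N (vprod N (\<lambda>i. wscale (d i) (w i)) (Suc m))
      (mmult N (mscale (\<Prod>i\<in>{1..m}. d i) (vprod N w m)) (mscale (d (Suc m)) (site_op m (vertex (w (Suc m))))))"
    unfolding vprod.simps site_op_wscale using Suc by (intro mmult_cong meq_refl) auto
  also have "meq N \<dots> (mscale (\<Prod>i\<in>{1..Suc m}. d i) (vprod N w (Suc m)))"
    by (simp add: mmult_mscale prod.cl_ivl_Suc mult.commute)
  finally show ?case .
qed

section \<open>The crossing relation\<close>

definition R_antipode_weights :: "complex \<Rightarrow> complex \<Rightarrow> weights" where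
  "R_antipode_weights \<eta> v = (1, sinh v / sinh (v - \<eta>), 0, - sinh \<eta> / sinh (v - \<eta>))"

definition Rt_antipode_weights :: "complex \<Rightarrow> complex \<Rightarrow> weights" where
  "Rt_antipode_weights \<eta> w =
     (sinh (w + \<eta>) ^ 2 / (sinh w * sinh (w + 2 * \<eta>)), sinh (w + \<eta>) / sinh w,
      - sinh \<eta> * sinh (w + \<eta>) / (sinh w * sinh (w + 2 * \<eta>)), 0)"

definition R_crossing_factor :: "complex \<Rightarrow> complex \<Rightarrow> complex" where
  "R_crossing_factor \<eta> v = sinh (v - \<eta>) ^ 2 / (sinh v * sinh (v - 2 * \<eta>))"

definition Rt_crossing_factor :: "complex \<Rightarrow> complex \<Rightarrow> complex" where
  "Rt_crossing_factor \<eta> w = sinh w * sinh (w + 2 * \<eta>) / sinh (w + \<eta>) ^ 2"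

lemma exp_times_two: "exp (x * 2) = exp x * exp (x::complex)"
  by (metis exp_add mult_2_right)

lemma exp_times_three: "exp (x * 3) = exp x * exp x * exp (x::complex)"
proof -
  have "x * 3 = x + x + x" by simp
  thus ?thesis by (simp only: exp_add)
qed

lemma wantipode_R_vertex:
  fixes v \<eta> :: complex
  assumes "sinh (v + \<eta>) \<noteq> 0" "sinh (v - \<eta>) \<noteq> 0"
  shows "winvertible (1, bfun \<eta> v, cfun \<eta> v, 0)"
    and "wantipode (1, bfun \<eta> v, cfun \<eta> v, 0) = R_antipode_weights \<eta> v"
proof -
  have "wmult (1, bfun \<eta> v, cfun \<eta> v, 0) (wtransp (R_antipode_weights \<eta> v)) = wone"
    using assms unfolding bfun_def cfun_def wmult_def wtransp_def wone_def R_antipode_weights_def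
    apply (simp add: field_simps)
    apply (thin_tac _)+
    unfolding sinh_field_def exp_minus exp_add exp_diff mult_2
    by (simp add: field_simps exp_times_two exp_times_three, (simp add: algebra_simps power2_eq_square)?)
  thus "winvertible (1, bfun \<eta> v, cfun \<eta> v, 0)"
    and "wantipode (1, bfun \<eta> v, cfun \<eta> v, 0) = R_antipode_weights \<eta> v"
    by (rule wantipode_eqI)+
qed

lemma wantipode_R_antipode_weights:
  fixes v \<eta> :: complex
  assumes "sinh v \<noteq> 0" "sinh (v - \<eta>) \<noteq> 0" "sinh (v - 2 * \<eta>) \<noteq> 0"
  shows "winvertible (R_antipode_weights \<eta> v)"
    and "wantipode (R_antipode_weights \<eta> v) =
           wscale (R_crossing_factor \<eta> v) (1, bfun \<eta> (v - 2 * \<eta>), cfun \<eta> (v - 2 * \<eta>), 0)"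
proof -
  have "sinh (v - 2 * \<eta> + \<eta>) \<noteq> 0" using assms(2) by (simp add: algebra_simps)
  with assms have "wmult (R_antipode_weights \<eta> v)
      (wtransp (wscale (R_crossing_factor \<eta> v) (1, bfun \<eta> (v - 2 * \<eta>), cfun \<eta> (v - 2 * \<eta>), 0))) = wone"
    unfolding bfun_def cfun_def wmult_def wtransp_def wone_def wscale_def R_antipode_weights_def
      R_crossing_factor_def
    apply (simp add: field_simps power2_eq_square)
    apply (thin_tac _)+
    unfolding sinh_field_def exp_minus exp_add exp_diff mult_2
    by (simp add: field_simps exp_times_two exp_times_three power2_eq_square,
        (simp add: algebra_simps power2_eq_square)?)
  thus "winvertible (R_antipode_weights \<eta> v)"
    and "wantipode (R_antipode_weights \<eta> v) =
           wscale (R_crossing_factor \<eta> v) (1, bfun \<eta> (v - 2 * \<eta>), cfun \<eta> (v - 2 * \<eta>), 0)"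
    by (rule wantipode_eqI)+
qed

lemma wantipode_Rt_vertex:
  fixes w \<eta> :: complex
  assumes "sinh w \<noteq> 0" "sinh (w + \<eta>) \<noteq> 0" "sinh (w + 2 * \<eta>) \<noteq> 0"
  shows "winvertible (1, bfun \<eta> w, 0, cfun \<eta> w)"
    and "wantipode (1, bfun \<eta> w, 0, cfun \<eta> w) = Rt_antipode_weights \<eta> w"
proof -
  have "wmult (1, bfun \<eta> w, 0, cfun \<eta> w) (wtransp (Rt_antipode_weights \<eta> w)) = wone"
    using assms unfolding bfun_def cfun_def wmult_def wtransp_def wone_def Rt_antipode_weights_def
    apply (simp add: field_simps)
    apply (thin_tac _)+
    unfolding sinh_field_def exp_minus exp_add exp_diff mult_2
    by (simp add: field_simps exp_times_two exp_times_three, (simp add: algebra_simps power2_eq_square)?)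
  thus "winvertible (1, bfun \<eta> w, 0, cfun \<eta> w)"
    and "wantipode (1, bfun \<eta> w, 0, cfun \<eta> w) = Rt_antipode_weights \<eta> w"
    by (rule wantipode_eqI)+
qed

lemma wantipode_Rt_antipode_weights:
  fixes w \<eta> :: complex
  assumes "sinh w \<noteq> 0" "sinh (w + \<eta>) \<noteq> 0" "sinh (w + 2 * \<eta>) \<noteq> 0" "sinh (w + 3 * \<eta>) \<noteq> 0"
  shows "winvertible (Rt_antipode_weights \<eta> w)"
    and "wantipode (Rt_antipode_weights \<eta> w) =
           wscale (Rt_crossing_factor \<eta> w) (1, bfun \<eta> (w + 2 * \<eta>), 0, cfun \<eta> (w + 2 * \<eta>))"
proof -
  have "sinh (w + 2 * \<eta> + \<eta>) \<noteq> 0" using assms(4) by (simp add: algebra_simps)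
  with assms have "wmult (Rt_antipode_weights \<eta> w)
      (wtransp (wscale (Rt_crossing_factor \<eta> w) (1, bfun \<eta> (w + 2 * \<eta>), 0, cfun \<eta> (w + 2 * \<eta>)))) = wone"
    unfolding bfun_def cfun_def wmult_def wtransp_def wone_def wscale_def Rt_antipode_weights_def
      Rt_crossing_factor_def
    apply (simp add: field_simps)
    apply (thin_tac _)+
    unfolding sinh_field_def exp_minus exp_add exp_diff mult_2
    by (simp add: field_simps exp_times_two exp_times_three, (simp add: algebra_simps power2_eq_square)?)
  thus "winvertible (Rt_antipode_weights \<eta> w)"
    and "wantipode (Rt_antipode_weights \<eta> w) =
           wscale (Rt_crossing_factor \<eta> w) (1, bfun \<eta> (w + 2 * \<eta>), 0, cfun \<eta> (w + 2 * \<eta>))"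
    by (rule wantipode_eqI)+
qed


definition tplus_antipode_weights :: "complex \<Rightarrow> real \<Rightarrow> nat \<Rightarrow> complex \<Rightarrow> nat \<Rightarrow> weights" where
  "tplus_antipode_weights \<eta> \<beta> N l i = (if even i then R_antipode_weights \<eta> (l - bN \<beta> N)
                                                  else Rt_antipode_weights \<eta> (- l - bN \<beta> N))"

definition crossing_factor :: "complex \<Rightarrow> real \<Rightarrow> nat \<Rightarrow> complex \<Rightarrow> nat \<Rightarrow> complex" where
  "crossing_factor \<eta> \<beta> N l i = (if even i then R_crossing_factor \<eta> (l - bN \<beta> N)
                                          else Rt_crossing_factor \<eta> (- l - bN \<beta> N))"

lemma wantipode_tplus_weights:
  assumes "generic \<eta> \<beta> N l"
  shows "winvertible (tplus_weights \<eta> \<beta> N l i)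
    \<and> wantipode (tplus_weights \<eta> \<beta> N l i) = tplus_antipode_weights \<eta> \<beta> N l i"
  using wantipode_R_vertex wantipode_Rt_vertex generic_sinh_shifts_nonzero[OF assms]
  unfolding tplus_weights_def tplus_antipode_weights_def by simp

lemma wantipode_tplus_antipode_weights:
  assumes "generic \<eta> \<beta> N l"
  shows "winvertible (tplus_antipode_weights \<eta> \<beta> N l i)
    \<and> wantipode (tplus_antipode_weights \<eta> \<beta> N l i)
        = wscale (crossing_factor \<eta> \<beta> N l i) (tplus_weights \<eta> \<beta> N (l - 2 * \<eta>) i)"
proof (cases "even i")
  case True
  have shift: "l - 2 * \<eta> - bN \<beta> N = l - bN \<beta> N - 2 * \<eta>" by simp
  from True show ?thesis
    using wantipode_R_antipode_weights[of "l - bN \<beta> N" \<eta>] generic_sinh_shifts_nonzero[OF assms]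
    unfolding tplus_weights_def tplus_antipode_weights_def crossing_factor_def shift by simp
next
  case False
  have shift: "- (l - 2 * \<eta>) - bN \<beta> N = - l - bN \<beta> N + 2 * \<eta>" by simp
  from False show ?thesis
    using wantipode_Rt_antipode_weights[of "- l - bN \<beta> N" \<eta>] generic_sinh_shifts_nonzero[OF assms]
    unfolding tplus_weights_def tplus_antipode_weights_def crossing_factor_def shift by simp
qed

lemma crossing_factor_pair:
  fixes v w \<eta> :: complex
  assumes "sinh v \<noteq> 0" "sinh (v + \<eta>) \<noteq> 0" "sinh (v - \<eta>) \<noteq> 0" "sinh (v - 2 * \<eta>) \<noteq> 0"
    and "sinh w \<noteq> 0" "sinh (w + \<eta>) \<noteq> 0" "sinh (w + 2 * \<eta>) \<noteq> 0"
  shows "inverse (bfun \<eta> v) * R_crossing_factor \<eta> v * Rt_crossing_factor \<eta> w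
       = bfun \<eta> (- v - \<eta>) * bfun \<eta> w / (bfun \<eta> (w + \<eta>) * bfun \<eta> (- v)) * inverse (bfun \<eta> (v - 2 * \<eta>))"
proof -
  have "- v - \<eta> = - (v + \<eta>)" "- v + \<eta> = - (v - \<eta>)"
    by simp_all
  hence "sinh (- v - \<eta>) = - sinh (v + \<eta>)" "sinh (- v + \<eta>) = - sinh (v - \<eta>)"
    by (simp_all only: sinh_minus)
  moreover have "w + \<eta> + \<eta> = w + 2 * \<eta>" "v - 2 * \<eta> + \<eta> = v - \<eta>"
    by simp_all
  ultimately
  show ?thesis using assms
    unfolding bfun_def R_crossing_factor_def Rt_crossing_factor_def by (simp add: field_simps power2_eq_square)
qed

lemma prod_alternating:
  "(\<Prod>i\<in>{1..2 * n}. if even i then a else b) = ((a::'a::comm_monoid_mult) * b) ^ n"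
proof (induction n)
  case (Suc n)
  have "{1..2 * Suc n} = insert (Suc (Suc (2 * n))) (insert (Suc (2 * n)) {1..2 * n})" by auto
  with Suc show ?case by (simp add: ac_simps)
qed simp

lemma crossing_scalar:
  assumes "generic \<eta> \<beta> N l" "even N"
  shows "inverse (afun \<eta> \<beta> N (- l)) * (\<Prod>i\<in>{1..N}. crossing_factor \<eta> \<beta> N l i)
       = delta \<eta> \<beta> N l * inverse (afun \<eta> \<beta> N (- (l - 2 * \<eta>)))"
proof -
  define v w n where "v = l - bN \<beta> N" and "w = - l - bN \<beta> N" and "n = N div 2"
  define X where "X = bfun \<eta> (- v - \<eta>) * bfun \<eta> w / (bfun \<eta> (w + \<eta>) * bfun \<eta> (- v))"
  have N: "N = 2 * n" using assms(2) by (simp add: n_def)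
  have afun: "afun \<eta> \<beta> N (- z) = bfun \<eta> (z - bN \<beta> N) ^ n" for z
    by (simp add: afun_def n_def)
  have "(\<Prod>i\<in>{1..N}. crossing_factor \<eta> \<beta> N l i) = (R_crossing_factor \<eta> v * Rt_crossing_factor \<eta> w) ^ n"
    unfolding N crossing_factor_def v_def w_def by (rule prod_alternating)
  hence "inverse (afun \<eta> \<beta> N (- l)) * (\<Prod>i\<in>{1..N}. crossing_factor \<eta> \<beta> N l i)
      = (inverse (bfun \<eta> v) * R_crossing_factor \<eta> v * Rt_crossing_factor \<eta> w) ^ n"
    by (simp add: afun v_def power_mult_distrib power_inverse mult.assoc)
  also have "\<dots> = X ^ n * inverse (bfun \<eta> (v - 2 * \<eta>)) ^ n"
    unfolding X_def power_mult_distrib[symmetric]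
    by (rule arg_cong[where f="\<lambda>x. x ^ n"], rule crossing_factor_pair)
       (use generic_sinh_shifts_nonzero[OF assms(1)] in \<open>simp_all add: v_def w_def\<close>)
  also have "X ^ n = delta \<eta> \<beta> N l"
    by (simp add: delta_def X_def v_def w_def n_def algebra_simps)
  also have "inverse (bfun \<eta> (v - 2 * \<eta>)) ^ n = inverse (afun \<eta> \<beta> N (- (l - 2 * \<eta>)))"
    unfolding afun by (simp add: v_def power_inverse algebra_simps)
  finally show ?thesis .
qed

lemma crossing_relation:
  assumes gen: "generic \<eta> \<beta> N l" and "even N"
  shows "am_invertible N (Tplus \<eta> \<beta> N l)"
    and "am_invertible N (antipode N (Tplus \<eta> \<beta> N l))"
    and "meq N (antipode N (antipode N (Tplus \<eta> \<beta> N l)))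
               (mscale (delta \<eta> \<beta> N l) (Tplus \<eta> \<beta> N (l - 2 * \<eta>)))"
proof -
  let ?k = "\<lambda>z. inverse (afun \<eta> \<beta> N (- z))"
  have "bfun \<eta> (l - bN \<beta> N) \<noteq> 0"
    using generic_sinh_shifts_nonzero[OF gen] by (simp add: bfun_def)
  hence k: "?k l \<noteq> 0" and k': "inverse (?k l) \<noteq> 0" by (simp_all add: afun_def)
  have antipode1: "(\<lambda>i. wantipode (tplus_weights \<eta> \<beta> N l i)) = tplus_antipode_weights \<eta> \<beta> N l"
    and antipode2: "(\<lambda>i. wantipode (tplus_antipode_weights \<eta> \<beta> N l i))
        = (\<lambda>i. wscale (crossing_factor \<eta> \<beta> N l i) (tplus_weights \<eta> \<beta> N (l - 2 * \<eta>) i))"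
    using wantipode_tplus_weights[OF gen] wantipode_tplus_antipode_weights[OF gen] by auto
  note T = antipode_vprod[OF k _ Tplus_eq_vprod, unfolded antipode1]
  show "am_invertible N (Tplus \<eta> \<beta> N l)"
    by (rule T(1)) (simp add: wantipode_tplus_weights[OF gen])
  note S = antipode_vprod[OF k' _ T(2), unfolded antipode2 inverse_inverse_eq]
  show "am_invertible N (antipode N (Tplus \<eta> \<beta> N l))"
    by (rule S(1)) (simp_all add: wantipode_tplus_weights[OF gen] wantipode_tplus_antipode_weights[OF gen])
  have "meq N (antipode N (antipode N (Tplus \<eta> \<beta> N l)))
      (mscale (?k l) (vprod N (\<lambda>i. wscale (crossing_factor \<eta> \<beta> N l i) (tplus_weights \<eta> \<beta> N (l - 2 * \<eta>) i)) N))"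
    by (rule S(2)) (simp_all add: wantipode_tplus_weights[OF gen] wantipode_tplus_antipode_weights[OF gen])
  also have "meq N \<dots> (mscale (?k l) (mscale (\<Prod>i\<in>{1..N}. crossing_factor \<eta> \<beta> N l i)
      (vprod N (tplus_weights \<eta> \<beta> N (l - 2 * \<eta>)) N)))"
    by (intro mscale_cong vprod_wscale le_refl)
  also have "meq N \<dots> (mscale (delta \<eta> \<beta> N l)
      (mscale (?k (l - 2 * \<eta>)) (vprod N (tplus_weights \<eta> \<beta> N (l - 2 * \<eta>)) N)))"
    by (simp only: mscale_mscale crossing_scalar[OF assms] meq_refl)
  also have "meq N \<dots> (mscale (delta \<eta> \<beta> N l) (Tplus \<eta> \<beta> N (l - 2 * \<eta>)))"
    by (rule mscale_cong, rule meq_sym, rule Tplus_eq_vprod)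
  finally show "meq N (antipode N (antipode N (Tplus \<eta> \<beta> N l)))
      (mscale (delta \<eta> \<beta> N l) (Tplus \<eta> \<beta> N (l - 2 * \<eta>)))" .
qed

theorem mainTheorem8:
  fixes \<eta> :: complex and \<beta> :: real and N :: nat
  assumes "\<beta> > 0" and "even N" and "N > 0"
  shows "(\<forall>l \<mu>. generic \<eta> \<beta> N l \<and> generic \<eta> \<beta> N \<mu> \<and> sinh (l - \<mu> + \<eta>) \<noteq> 0
              \<longrightarrow> RTT \<eta> N (Tplus \<eta> \<beta> N) l \<mu>)
       \<and> (\<forall>l. generic \<eta> \<beta> N l \<longrightarrow>
              am_invertible N (Tplus \<eta> \<beta> N l)
            \<and> am_invertible N (antipode N (Tplus \<eta> \<beta> N l))
            \<and> am_eq N (antipode N (antipode N (Tplus \<eta> \<beta> N l)))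
                     (\<lambda>a b s t. delta \<eta> \<beta> N l * Tplus \<eta> \<beta> N (l - 2 * \<eta>) a b s t))"
proof -
  have "(\<lambda>a b s t. delta \<eta> \<beta> N l * Tplus \<eta> \<beta> N (l - 2 * \<eta>) a b s t)
      = mscale (delta \<eta> \<beta> N l) (Tplus \<eta> \<beta> N (l - 2 * \<eta>))" for l
    by (simp add: fun_eq_iff mscale_def)
  thus ?thesis
    using RTT_Tplus crossing_relation[OF _ assms(2)] unfolding am_eq_eq_meq by simp
qed

end
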